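(* Fix an integer $k\ge2$ and let $w,\sigma=w^{-1},\widetilde w$ be as in the context. Let $l\in\{0,\dots,n\}$ and let $I$ be an interval carrying $w_{n-l}$. Then for every $m\in\{0,\dots,k-2\}$, $$\int_{I_m}(\widetilde w)^2\sigma\le 30\,p^2\,w(I_m).$$
   Context: All intervals are half-open, $[a,b)$; $w(E)=\int_E w$. Fix an integer $k\ge2$, $\varepsilon=3^{-k}$, $p=\frac{1}{3\varepsilon}\Big(\frac{1+\varepsilon}{2}+\frac{4\varepsilon^2}{1+\varepsilon}\Big)$, $u=\sqrt p+\sqrt{p-1}$. For an interval $I$: $I_\pm$ its left/right halves; $I_m$ ($0\le m\le k-1$) the interval with the same right endpoint as $I$ and length $3^{-m}|I|$; $J^{(i)}$ ($i=1,2,3$) the $i$-th from the left of the three equal thirds of $J$. For $\omega\sigma=p$: $w_0(\omega,\sigma,I)=\frac{\omega}{\sqrt p}(u\chi_{I_-}+u^{-1}\chi_{I_+})$ and, for $\nu\ge1$, $w_\nu(\omega,\sigma,I)=\frac{\omega}{p}\big(\sum_{m=0}^{k-2}\chi_{I_m^{(1)}}+\chi_{I_{k-1}^{(1)}\cup I_{k-1}^{(2)}}+\frac{4\varepsilon}{1+\varepsilon}\chi_{I_{k-1}^{(3)}}\big)+\sum_{m=0}^{k-2}w_{\nu-1}(2\omega,\frac\sigma2,I_m^{(2)})$. Let $n=3^{k-1}$, let $w$ be the $1$-periodic extension of $w_n(1,p,[0,1))$ to $\mathbb R$, and $\sigma=w^{-1}$. Carrying: each $[j,j+1)$, $j\in\mathbb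 Z$, carries $w_n$; if $I$ carries $w_\nu$ with $\nu\ge1$, then each $I_m^{(2)}$, $0\le m\le k-2$, carries $w_{\nu-1}$. $\operatorname{supp}w_\nu$ is the union of all intervals carrying $w_\nu$. $\widetilde w=\sum_{l=1}^n2^l\chi_{\operatorname{supp}w_{n-(l-1)}\setminus\operatorname{supp}w_{n-l}}+2^{n+1}\chi_{\operatorname{supp}w_0}$. *)

theory Defs
  imports "HOL-Analysis.Analysis"
begin

text \<open>Intervals are half-open [a,b), represented by their endpoints (a,b).\<close>

definition eps :: "nat \<Rightarrow> real" where
  "eps k = 1 / 3 ^ k"

definition pp :: "nat \<Rightarrow> real" where
  "pp k = 1 / (3 * eps k) * ((1 + eps k) / 2 + 4 * (eps k)^2 / (1 + eps k))"

definition uu :: "nat \<Rightarrow> real" where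
  "uu k = sqrt (pp k) + sqrt (pp k - 1)"

definition nn :: "nat \<Rightarrow> nat" where
  "nn k = 3 ^ (k - 1)"

definition ico :: "real \<times> real \<Rightarrow> real set" where
  "ico I = {fst I..<snd I}"

text \<open>I_m: same right endpoint as I, length 3^(-m) |I|.\<close>
definition subI :: "real \<times> real \<Rightarrow> nat \<Rightarrow> real \<times> real" where
  "subI I m = (snd I - (snd I - fst I) / 3 ^ m, snd I)"

text \<open>J^(i): i-th (i=1,2,3) third of J from the left.\<close>
definition third :: "real \<times> real \<Rightarrow> nat \<Rightarrow> real \<times> real" where
  "third J i = (fst J + (real i - 1) * (snd J - fst J) / 3, fst J + real i * (snd J - fst J) / 3)"

definition lefthalf :: "real \<times> real \<Rightarrow> real \<times> real" where
  "lefthalf I = (fst I, (fst I + snd I) / 2)"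

definition righthalf :: "real \<times> real \<Rightarrow> real \<times> real" where
  "righthalf I = ((fst I + snd I) / 2, snd I)"

text \<open>w_0(omega, sigma, I); the parameter sigma does not enter the values.\<close>
definition w0 :: "nat \<Rightarrow> real \<Rightarrow> real \<Rightarrow> real \<times> real \<Rightarrow> real \<Rightarrow> real" where
  "w0 k \<omega> \<sigma> I x = \<omega> / sqrt (pp k) *
     (uu k * indicator (ico (lefthalf I)) x + (1 / uu k) * indicator (ico (righthalf I)) x)"

fun wnu :: "nat \<Rightarrow> nat \<Rightarrow> real \<Rightarrow> real \<Rightarrow> real \<times> real \<Rightarrow> real \<Rightarrow> real" where
  "wnu k 0 \<omega> \<sigma> I x = w0 k \<omega> \<sigma> I x"
| "wnu k (Suc \<nu>) \<omega> \<sigma> I x =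
     \<omega> / pp k * ((\<Sum>m = 0..k - 2. indicator (ico (third (subI I m) 1)) x)
        + indicator (ico (third (subI I (k - 1)) 1) \<union> ico (third (subI I (k - 1)) 2)) x
        + 4 * eps k / (1 + eps k) * indicator (ico (third (subI I (k - 1)) 3)) x)
     + (\<Sum>m = 0..k - 2. wnu k \<nu> (2 * \<omega>) (\<sigma> / 2) (third (subI I m) 2) x)"

definition ww :: "nat \<Rightarrow> real \<Rightarrow> real" where
  "ww k x = wnu k (nn k) 1 (pp k) (0, 1) (frac x)"

definition sig :: "nat \<Rightarrow> real \<Rightarrow> real" where
  "sig k x = 1 / ww k x"

inductive carries :: "nat \<Rightarrow> nat \<Rightarrow> real \<times> real \<Rightarrow> bool" for k where
  base: "carries k (nn k) (real_of_int j, real_of_int j + 1)"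
| step: "carries k (Suc \<nu>) I \<Longrightarrow> m \<le> k - 2 \<Longrightarrow> carries k \<nu> (third (subI I m) 2)"

definition suppw :: "nat \<Rightarrow> nat \<Rightarrow> real set" where
  "suppw k \<nu> = (\<Union>I \<in> {I. carries k \<nu> I}. ico I)"

definition wtilde :: "nat \<Rightarrow> real \<Rightarrow> real" where
  "wtilde k x = (\<Sum>l = 1..nn k. 2 ^ l * indicator (suppw k (nn k - (l - 1)) - suppw k (nn k - l)) x)
     + 2 ^ (nn k + 1) * indicator (suppw k 0) x"

end

theory Submission
  imports Defs
begin

text \<open>
  On an interval I carrying w_\<nu> the weight w equals w_\<nu>(\<omega>, \<sigma>, I) with \<omega> = 2^(n-\<nu>), and
  wtilde equals 2\<omega> on the part of I not covered by the children I_m^(2), which carry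
  w_(\<nu>-1) with weight 2\<omega>; for \<nu> = 0 it is at most 2\<omega> on all of I. The square of this
  recursive majorant T of wtilde, divided by w, is again a recursion of the same shape, and its
  integral over an interval J is g_\<nu> p \<omega> |J| with g_\<nu> \<le> (1+\<epsilon>)/\<epsilon> \<le> 6p. On I_m we have
  T^2/w \<le> 30 p^2 w pointwise except on the last third of I_(k-1), where w is small; every child
  inside I_m contributes \<integral>T^2/w - 30 p^2 \<integral>w = 2\<omega>p (g_(\<nu>-1) - 30p) |child| \<le> 0, and the deficit
  of the smallest child already pays for that last third.
\<close>

lemma sum_eq_single:
  assumes "finite A" "j \<in> A" "\<And>m. m \<in> A \<Longrightarrow> m \<noteq> j \<Longrightarrow> f m = 0"
  shows "sum f A = f j"
  using sum.mono_neutral_right[of A "{j}" f] assms by auto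

lemma sum_le_last:
  fixes f :: "nat \<Rightarrow> real"
  assumes "m0 \<le> N" "\<And>m. m0 \<le> m \<Longrightarrow> m < N \<Longrightarrow> f m \<le> 0"
  shows "sum f {m0..N} \<le> f N"
proof -
  have "sum f {m0..N} = f N + sum f ({m0..N} - {N})" using assms(1) by (simp add: sum.remove)
  moreover have "sum f ({m0..N} - {N}) \<le> 0" using assms(2) by (intro sum_nonpos) auto
  ultimately show ?thesis by simp
qed

lemma set_integral_mono_nonneg:
  fixes f g :: "'a \<Rightarrow> real"
  assumes "set_integrable M A g" "\<And>x. x \<in> A \<Longrightarrow> f x \<le> g x" "\<And>x. x \<in> A \<Longrightarrow> 0 \<le> g x"
  shows "(LINT x:A|M. f x) \<le> (LINT x:A|M. g x)"
  using assms unfolding set_integrable_def set_lebesgue_integral_def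
  by (intro integral_mono') (auto simp: indicator_def)

lemma has_bochner_integral_indicator_ico:
  "fst J \<le> snd J \<Longrightarrow> has_bochner_integral lborel (indicator (ico J)) (snd J - fst J)"
  using has_bochner_integral_real_indicator[of "ico J" lborel] by (simp add: ico_def)

lemma integrable_indicator_times:
  fixes f :: "real \<Rightarrow> real"
  assumes "has_bochner_integral lborel f v"
  shows "integrable lborel (\<lambda>x. indicator (ico K) x * f x)"
  using integrable_real_mult_indicator[of "ico K" lborel f] assms
  by (simp add: ico_def has_bochner_integral_iff mult.commute)

section \<open>The intervals I_m and their thirds\<close>

text \<open>Since I_m^(3) = I_(m+1), the I_m decrease and I_m^(1) \<union> I_m^(2) is the band I_m - I_(m+1).\<close>

lemma third_subI_3: "third (subI J m) 3 = subI J (Suc m)"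
  by (simp add: third_def subI_def field_simps)

lemma ico_thirds: "ico K = ico (third K 1) \<union> ico (third K 2) \<union> ico (third K 3)"
  by (auto simp: ico_def third_def field_simps)

lemma ico_thirds_disjoint:
  "ico (third K 1) \<inter> ico (third K 2) = {}"
  "ico (third K 1) \<inter> ico (third K 3) = {}"
  "ico (third K 2) \<inter> ico (third K 3) = {}"
  by (auto simp: ico_def third_def field_simps)

lemma ico_subI_0 [simp]: "ico (subI J 0) = ico J"
  by (simp add: ico_def subI_def)

lemma ico_subI_Suc:
  "ico (subI J m) = ico (third (subI J m) 1) \<union> ico (third (subI J m) 2) \<union> ico (subI J (Suc m))"
  using ico_thirds[of "subI J m"] by (simp add: third_subI_3)

lemma ico_subI_antimono: "m \<le> m' \<Longrightarrow> ico (subI J m') \<subseteq> ico (subI J m)"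
  by (induction m' rule: dec_induct) (use ico_subI_Suc in blast)+

lemma ico_third_subI_subset: "i \<in> {1, 2, 3} \<Longrightarrow> ico (third (subI J m) i) \<subseteq> ico J"
  using ico_thirds[of "subI J m"] ico_subI_antimono[of 0 m J] by auto

lemma ico_third_subI_disjoint_Suc:
  "i \<in> {1, 2} \<Longrightarrow> ico (third (subI J m) i) \<inter> ico (subI J (Suc m)) = {}"
  using ico_thirds_disjoint[of "subI J m"] by (auto simp: third_subI_3)

lemma third_subI_band_unique:
  assumes "i \<in> {1, 2}" "i' \<in> {1, 2}"
    and "x \<in> ico (third (subI J m) i)" "x \<in> ico (third (subI J m') i')"
  shows "m = m'"
proof (rule ccontr)
  have in_band: "x \<in> ico (subI J n)" "x \<notin> ico (subI J (Suc n))"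
    if "x \<in> ico (third (subI J n) j)" "j \<in> {1, 2}" for n j
    using that ico_subI_Suc[of J n] ico_third_subI_disjoint_Suc[of j J n] by auto
  assume "m \<noteq> m'"
  then consider "Suc m \<le> m'" | "Suc m' \<le> m" by linarith
  then show False
    using in_band[OF assms(3,1)] in_band[OF assms(4,2)] ico_subI_antimono by cases blast+
qed

lemma ico_band_exists:
  assumes "x \<in> ico J" "x \<notin> ico (subI J N)"
  shows "\<exists>j<N. x \<in> ico (third (subI J j) 1) \<union> ico (third (subI J j) 2)"
  using assms(2)
proof (induction N)
  case 0 with assms(1) show ?case by simp
next
  case (Suc N)
  show ?case
  proof (cases "x \<in> ico (subI J N)")
    case True with Suc.prems show ?thesis using ico_subI_Suc[of J N] by blast
  next
    case False with Suc.IH show ?thesis using less_SucI by blast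
  qed
qed

lemma child_mem_subI_iff:
  assumes "x \<in> ico (third (subI J j) 2)"
  shows "x \<in> ico (subI J m) \<longleftrightarrow> m \<le> j"
proof
  assume "x \<in> ico (subI J m)"
  show "m \<le> j"
  proof (rule ccontr)
    assume "\<not> m \<le> j"
    then have "ico (subI J m) \<subseteq> ico (subI J (Suc j))" by (intro ico_subI_antimono) simp
    with \<open>x \<in> ico (subI J m)\<close> assms ico_third_subI_disjoint_Suc[of 2 J j] show False by blast
  qed
next
  assume "m \<le> j"
  then show "x \<in> ico (subI J m)"
    using assms ico_subI_Suc[of J j] ico_subI_antimono[of m j J] by blast
qed

lemma ico_last_third_disjoint:
  assumes "2 \<le> k" "m \<le> k - 1" "i \<in> {1, 2}" "x \<in> ico (third (subI J (k-1)) 3)"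
  shows "x \<notin> ico (third (subI J m) i)"
proof -
  have "Suc (k - 1) = k" "Suc m \<le> k" using assms(1,2) by arith+
  then have "x \<in> ico (subI J (Suc m))"
    using assms(4) ico_subI_antimono[of "Suc m" k J] by (auto simp: third_subI_3)
  then show ?thesis using ico_third_subI_disjoint_Suc[OF assms(3)] by blast
qed

lemma position_cases:
  obtains (outside) "x \<notin> ico J"
  | (top) "x \<in> ico J" "\<forall>m\<le>k-2. x \<notin> ico (third (subI J m) 2)" "x \<notin> ico (third (subI J (k-1)) 3)"
  | (last) "x \<in> ico (third (subI J (k-1)) 3)"
  | (child) j where "j \<le> k-2" "x \<in> ico (third (subI J j) 2)"
  using ico_third_subI_subset[of _ J] by blast

lemma ico_halves: "ico J = ico (lefthalf J) \<union> ico (righthalf J)"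
  by (auto simp: ico_def lefthalf_def righthalf_def)

lemma ico_halves_disjoint: "ico (lefthalf J) \<inter> ico (righthalf J) = {}"
  by (auto simp: ico_def lefthalf_def righthalf_def)

lemma length_third_subI: "snd (third (subI J m) i) - fst (third (subI J m) i) = (snd J - fst J) / 3 ^ Suc m"
  by (simp add: third_def subI_def field_simps)

lemma third_subI_le:
  assumes "fst J \<le> snd J"
  shows "fst (third (subI J m) i) \<le> snd (third (subI J m) i)"
proof -
  have "0 \<le> (snd J - fst J) / 3 ^ Suc m" using assms by simp
  then show ?thesis using length_third_subI[of J m i] by linarith
qed

lemma has_bochner_integral_indicator_third_subI:
  assumes "fst J \<le> snd J"
  shows "has_bochner_integral lborel (indicator (ico (third (subI J m) i))) ((snd J - fst J) / 3 ^ Suc m)"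
  using has_bochner_integral_indicator_ico[OF third_subI_le[OF assms, of m i]] length_third_subI[of J m i]
  by simp

section \<open>The constants \<epsilon>, p and u\<close>

lemma eps_pos: "0 < eps k"
  by (simp add: eps_def)

lemma eps_le: "2 \<le> k \<Longrightarrow> eps k \<le> 1 / 9"
  using power_increasing[of 2 k "3::real"] by (simp add: eps_def divide_simps)

lemma eps_Suc_pred: "1 \<le> k \<Longrightarrow> L / 3 ^ Suc (k - 1) = L * eps k"
  by (simp add: eps_def)

lemma eps_pred: "1 \<le> k \<Longrightarrow> L / 3 ^ (k - 1) = 3 * L * eps k"
  by (cases k) (simp_all add: eps_def)

lemma three_eps_pp: "3 * eps k * pp k = (1 + eps k) / 2 + 4 * (eps k)\<^sup>2 / (1 + eps k)"
  using eps_pos[of k] by (simp add: pp_def)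

lemma layer_weight_eq:
  "(1 - 3 * eps k) / 2 + 2 * eps k + 4 * eps k / (1 + eps k) * eps k = 3 * eps k * pp k"
  unfolding three_eps_pp by (simp add: field_simps power2_eq_square)

lemma eps_ratio_le_pp: "(1 + eps k) / eps k \<le> 6 * pp k"
proof -
  have e: "0 < eps k" by (rule eps_pos)
  have "0 \<le> 4 * (eps k)\<^sup>2 / (1 + eps k)" using e by simp
  then have "(1 + eps k) / 2 \<le> 3 * eps k * pp k" using three_eps_pp[of k] by linarith
  then have "1 + eps k \<le> 6 * pp k * eps k" by (simp add: mult_ac)
  then show ?thesis by (simp add: pos_divide_le_eq[OF e])
qed

lemma one_less_pp: "2 \<le> k \<Longrightarrow> 1 < pp k"
proof -
  assume "2 \<le> k"
  then have "10 \<le> (1 + eps k) / eps k" using eps_le[of k] eps_pos[of k] by (simp add: field_simps)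
  then show ?thesis using eps_ratio_le_pp[of k] by linarith
qed

lemma one_le_uu: "2 \<le> k \<Longrightarrow> 1 \<le> uu k"
  using one_less_pp[of k] by (simp add: uu_def add_increasing2)

lemma uu_add_inverse: "2 \<le> k \<Longrightarrow> uu k + 1 / uu k = 2 * sqrt (pp k)"
proof -
  assume "2 \<le> k"
  then have p: "1 < pp k" by (rule one_less_pp)
  have "(sqrt (pp k) + sqrt (pp k - 1)) * (sqrt (pp k) - sqrt (pp k - 1)) = 1"
    using p by (simp add: algebra_simps)
  moreover have "uu k \<noteq> 0" using \<open>2 \<le> k\<close> one_le_uu[of k] by simp
  ultimately have "1 / uu k = sqrt (pp k) - sqrt (pp k - 1)"
    by (simp add: uu_def divide_eq_eq mult.commute)
  then show ?thesis by (simp add: uu_def)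
qed

lemma uu_le: "uu k \<le> 2 * sqrt (pp k)"
  by (simp add: uu_def)

lemma sum_thirds_geometric:
  assumes "2 \<le> k"
  shows "(\<Sum>m = 0..k - 2. L / 3 ^ Suc m) = L * (1 - 3 * eps k) / 2"
proof -
  have geom: "(\<Sum>m<N. L / 3 ^ Suc m) = L * (1 - 1 / 3 ^ N) / 2" for N
  proof (induction N)
    case (Suc N)
    have "(\<Sum>m<Suc N. L / 3 ^ Suc m) = L * (1 - 1 / 3 ^ N) / 2 + L / 3 ^ Suc N"
      using Suc.IH by simp
    also have "\<dots> = L * (1 - 1 / 3 ^ Suc N) / 2" by (simp add: field_simps)
    finally show ?case .
  qed simp
  have "{0..k - 2} = {..<k - 1}" using assms by auto
  moreover have "1 / 3 ^ (k - 1) = 3 * eps k" using eps_pred[of k 1] assms by simp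
  ultimately show ?thesis using geom[of "k - 1"] by simp
qed

section \<open>One generation of the weights\<close>

text \<open>The common shape of the non-recursive part of w_(\<nu>+1) and of the two functions defined
  below: weight a on I minus the children I_m^(2), except a c on I_(k-1)^(3).\<close>

definition layer :: "nat \<Rightarrow> real \<Rightarrow> real \<Rightarrow> real \<times> real \<Rightarrow> real \<Rightarrow> real" where
  "layer k a c J x = a * ((\<Sum>m = 0..k - 2. indicator (ico (third (subI J m) 1)) x)
     + indicator (ico (third (subI J (k - 1)) 1) \<union> ico (third (subI J (k - 1)) 2)) x
     + c * indicator (ico (third (subI J (k - 1)) 3)) x)"

lemma layer_outside: "x \<notin> ico J \<Longrightarrow> layer k a c J x = 0"
  using ico_third_subI_subset[of _ J] by (auto simp: layer_def indicator_def)

lemma layer_last: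
  assumes "2 \<le> k" "x \<in> ico (third (subI J (k-1)) 3)"
  shows "layer k a c J x = a * c"
  using ico_last_third_disjoint[OF assms(1) _ _ assms(2)] assms by (simp add: layer_def)

lemma layer_child:
  assumes "2 \<le> k" "j \<le> k - 2" "x \<in> ico (third (subI J j) 2)"
  shows "layer k a c J x = 0"
proof -
  have P1: "x \<notin> ico (third (subI J m) 1)" for m
  proof
    assume x1: "x \<in> ico (third (subI J m) 1)"
    then have "m = j" using third_subI_band_unique assms(3) by blast
    with x1 assms(3) ico_thirds_disjoint(1) show False by blast
  qed
  have P2: "x \<notin> ico (third (subI J (k-1)) 2)"
    using third_subI_band_unique[OF _ _ assms(3)] assms(1,2) by fastforce
  have "Suc j \<le> k" using assms(1,2) by arith
  have "x \<notin> ico (subI J (Suc j))"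
    using assms(3) ico_third_subI_disjoint_Suc[of 2 J j] by blast
  then have P3: "x \<notin> ico (third (subI J (k-1)) 3)"
    using ico_subI_antimono[OF \<open>Suc j \<le> k\<close>, of J] assms(1) by (auto simp: third_subI_3)
  show ?thesis using P1 P2 P3 by (simp add: layer_def)
qed

lemma layer_top:
  assumes "2 \<le> k" "x \<in> ico J" "\<forall>m\<le>k-2. x \<notin> ico (third (subI J m) 2)"
    and "x \<notin> ico (third (subI J (k-1)) 3)"
  shows "layer k a c J x = a"
proof (cases "x \<in> ico (subI J (k-1))")
  case True
  have "Suc (k - 1) = k" using assms(1) by arith
  then obtain i where i: "i \<in> {1, 2}" "x \<in> ico (third (subI J (k-1)) i)"
    using True assms(4) ico_subI_Suc[of J "k-1"] by (auto simp: third_subI_3)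
  have "x \<notin> ico (third (subI J m) 1)" if "m \<le> k - 2" for m
  proof
    assume "x \<in> ico (third (subI J m) 1)"
    then have "m = k - 1" using third_subI_band_unique[OF _ i(1) _ i(2)] by blast
    with that assms(1) show False by arith
  qed
  moreover have "x \<in> ico (third (subI J (k-1)) 1) \<union> ico (third (subI J (k-1)) 2)"
    using i by auto
  ultimately show ?thesis using assms(4) by (simp add: layer_def)
next
  case False
  then obtain j i where j: "j < k - 1" "i \<in> {1, 2}" "x \<in> ico (third (subI J j) i)"
    using ico_band_exists[OF assms(2)] by blast
  then have j1: "x \<in> ico (third (subI J j) 1)" using assms(3) by auto
  have other: "x \<notin> ico (third (subI J m) i')" if "m \<noteq> j" "i' \<in> {1, 2}" for m i'
    using that j1 third_subI_band_unique[of i' 1 x J m j] by auto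
  have "(\<Sum>m = 0..k - 2. indicator (ico (third (subI J m) 1)) x :: real) = 1"
    using j j1 other by (subst sum_eq_single[of _ j]) auto
  moreover have "x \<notin> ico (third (subI J (k-1)) 1) \<union> ico (third (subI J (k-1)) 2)"
    using other j(1) by auto
  ultimately show ?thesis using assms(4) by (simp add: layer_def)
qed

lemma layer_nonneg: "0 \<le> a \<Longrightarrow> 0 \<le> c \<Longrightarrow> 0 \<le> layer k a c J x"
  by (simp add: layer_def sum_nonneg)

lemma has_bochner_integral_layer:
  assumes "2 \<le> k" "fst J \<le> snd J"
  shows "has_bochner_integral lborel (layer k a c J)
           (a * (snd J - fst J) * ((1 - 3 * eps k) / 2 + 2 * eps k + c * eps k))"
proof -
  define L where "L = snd J - fst J"
  define P where "P m i = ico (third (subI J m) i)" for m i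
  note ind = has_bochner_integral_indicator_third_subI[OF assms(2), folded L_def P_def]
  have last: "L / 3 ^ Suc (k - 1) = L * eps k" using assms(1) eps_Suc_pred[of k L] by simp
  have "has_bochner_integral lborel
      (\<lambda>x. a * ((\<Sum>m = 0..k - 2. indicator (P m 1) x)
                + (indicator (P (k - 1) 1) x + indicator (P (k - 1) 2) x) + c * indicator (P (k - 1) 3) x))
      (a * ((\<Sum>m = 0..k - 2. L / 3 ^ Suc m) + (L * eps k + L * eps k) + c * (L * eps k)))"
    by (intro has_bochner_integral_mult_right has_bochner_integral_add has_bochner_integral_sum
        ind ind[of "k - 1", unfolded last])
  moreover have "indicator (P (k - 1) 1 \<union> P (k - 1) 2) x = indicator (P (k - 1) 1) x + (indicator (P (k - 1) 2) x :: real)" for x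
    using ico_thirds_disjoint(1)[of "subI J (k - 1)"] by (auto simp: P_def indicator_def)
  then have "layer k a c J = (\<lambda>x. a * ((\<Sum>m = 0..k - 2. indicator (P m 1) x)
                + (indicator (P (k - 1) 1) x + indicator (P (k - 1) 2) x) + c * indicator (P (k - 1) 3) x))"
    by (simp add: fun_eq_iff layer_def P_def)
  moreover have "a * ((\<Sum>m = 0..k - 2. L / 3 ^ Suc m) + (L * eps k + L * eps k) + c * (L * eps k))
      = a * L * ((1 - 3 * eps k) / 2 + 2 * eps k + c * eps k)"
    unfolding sum_thirds_geometric[OF assms(1)] by (simp add: algebra_simps)
  ultimately show ?thesis by (simp only: L_def)
qed

lemma has_bochner_integral_children:
  assumes "2 \<le> k" "fst J \<le> snd J"
    and "\<And>m. has_bochner_integral lborel (f m) (c * (snd J - fst J) / 3 ^ Suc m)"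
  shows "has_bochner_integral lborel (\<lambda>x. \<Sum>m = 0..k - 2. f m x) (c * (snd J - fst J) * (1 - 3 * eps k) / 2)"
proof -
  have "has_bochner_integral lborel (\<lambda>x. \<Sum>m = 0..k - 2. f m x) (\<Sum>m = 0..k - 2. c * (snd J - fst J) / 3 ^ Suc m)"
    using assms(3) by (rule has_bochner_integral_sum)
  then show ?thesis using sum_thirds_geometric[OF assms(1), of "c * (snd J - fst J)"] by (simp only:)
qed

lemma wnu_Suc_layer:
  "wnu k (Suc \<nu>) \<omega> \<sigma> J x = layer k (\<omega> / pp k) (4 * eps k / (1 + eps k)) J x
     + (\<Sum>m = 0..k - 2. wnu k \<nu> (2 * \<omega>) (\<sigma> / 2) (third (subI J m) 2) x)"
  by (simp only: wnu.simps layer_def)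

text \<open>On an interval carrying w_\<nu>, majorant with \<omega> = 2^(n-\<nu>) dominates wtilde;
  majorant_sq_over_w is its square divided by w_\<nu>.\<close>

fun majorant :: "nat \<Rightarrow> nat \<Rightarrow> real \<Rightarrow> real \<times> real \<Rightarrow> real \<Rightarrow> real" where
  "majorant k 0 \<omega> J x = 2 * \<omega> * indicator (ico J) x"
| "majorant k (Suc \<nu>) \<omega> J x = layer k (2 * \<omega>) 1 J x
     + (\<Sum>m = 0..k - 2. majorant k \<nu> (2 * \<omega>) (third (subI J m) 2) x)"

fun majorant_sq_over_w :: "nat \<Rightarrow> nat \<Rightarrow> real \<Rightarrow> real \<times> real \<Rightarrow> real \<Rightarrow> real" where
  "majorant_sq_over_w k 0 \<omega> J x = 4 * \<omega> * sqrt (pp k)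
     * (indicator (ico (lefthalf J)) x / uu k + uu k * indicator (ico (righthalf J)) x)"
| "majorant_sq_over_w k (Suc \<nu>) \<omega> J x = layer k (4 * \<omega> * pp k) ((1 + eps k) / (4 * eps k)) J x
     + (\<Sum>m = 0..k - 2. majorant_sq_over_w k \<nu> (2 * \<omega>) (third (subI J m) 2) x)"

declare wnu.simps(2) [simp del] majorant.simps(2) [simp del] majorant_sq_over_w.simps(2) [simp del]

lemma wnu_outside: "x \<notin> ico J \<Longrightarrow> wnu k \<nu> \<omega> \<sigma> J x = 0"
proof (induction \<nu> arbitrary: \<omega> \<sigma> J)
  case 0 then show ?case using ico_halves[of J] by (simp add: w0_def)
next
  case (Suc \<nu>)
  have "x \<notin> ico (third (subI J m) 2)" for m using Suc.prems ico_third_subI_subset[of 2 J] by blast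
  then show ?case using Suc by (simp add: wnu_Suc_layer layer_outside)
qed

lemma majorant_outside: "x \<notin> ico J \<Longrightarrow> majorant k \<nu> \<omega> J x = 0"
proof (induction \<nu> arbitrary: \<omega> J)
  case (Suc \<nu>)
  have "x \<notin> ico (third (subI J m) 2)" for m using Suc.prems ico_third_subI_subset[of 2 J] by blast
  then show ?case using Suc by (simp add: majorant.simps(2) layer_outside)
qed simp

lemma majorant_sq_over_w_outside: "x \<notin> ico J \<Longrightarrow> majorant_sq_over_w k \<nu> \<omega> J x = 0"
proof (induction \<nu> arbitrary: \<omega> J)
  case 0 then show ?case using ico_halves[of J] by simp
next
  case (Suc \<nu>)
  have "x \<notin> ico (third (subI J m) 2)" for m using Suc.prems ico_third_subI_subset[of 2 J] by blast
  then show ?case using Suc by (simp add: majorant_sq_over_w.simps(2) layer_outside)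
qed

lemma wnu_nonneg: "2 \<le> k \<Longrightarrow> 0 \<le> \<omega> \<Longrightarrow> 0 \<le> wnu k \<nu> \<omega> \<sigma> J x"
proof (induction \<nu> arbitrary: \<omega> \<sigma> J)
  case 0 then show ?case using one_le_uu[of k] one_less_pp[of k] by (simp add: w0_def)
next
  case (Suc \<nu>) then show ?case
    using one_less_pp[of k] eps_pos[of k] by (simp add: wnu_Suc_layer layer_nonneg sum_nonneg)
qed

lemma majorant_sq_over_w_nonneg: "2 \<le> k \<Longrightarrow> 0 \<le> \<omega> \<Longrightarrow> 0 \<le> majorant_sq_over_w k \<nu> \<omega> J x"
proof (induction \<nu> arbitrary: \<omega> J)
  case 0 then show ?case using one_le_uu[of k] one_less_pp[of k] by simp
next
  case (Suc \<nu>) then show ?case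
    using one_less_pp[of k] eps_pos[of k]
    by (simp add: majorant_sq_over_w.simps(2) layer_nonneg sum_nonneg)
qed

lemma sum_children_at:
  assumes "finite A" "j \<in> A" "x \<in> ico (third (subI J j) 2)"
    and "\<And>m. x \<notin> ico (third (subI J m) 2) \<Longrightarrow> f m = 0"
  shows "sum f A = f j"
proof (rule sum_eq_single[OF assms(1,2)])
  fix m assume "m \<in> A" "m \<noteq> j"
  then have "x \<notin> ico (third (subI J m) 2)"
    using third_subI_band_unique[of 2 2 x J m j] assms(3) by auto
  then show "f m = 0" by (rule assms(4))
qed

lemma Suc_level_cases:
  assumes "2 \<le> k"
  obtains (outside) "x \<notin> ico J"
      "wnu k (Suc \<nu>) \<omega> \<sigma> J x = 0" "majorant k (Suc \<nu>) \<omega> J x = 0"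
      "majorant_sq_over_w k (Suc \<nu>) \<omega> J x = 0"
  | (top) "x \<in> ico J" "\<forall>m\<le>k-2. x \<notin> ico (third (subI J m) 2)"
      "wnu k (Suc \<nu>) \<omega> \<sigma> J x = \<omega> / pp k" "majorant k (Suc \<nu>) \<omega> J x = 2 * \<omega>"
      "majorant_sq_over_w k (Suc \<nu>) \<omega> J x = 4 * \<omega> * pp k"
  | (last) "x \<in> ico (third (subI J (k-1)) 3)" "\<forall>m\<le>k-2. x \<notin> ico (third (subI J m) 2)"
      "wnu k (Suc \<nu>) \<omega> \<sigma> J x = \<omega> / pp k * (4 * eps k / (1 + eps k))"
      "majorant k (Suc \<nu>) \<omega> J x = 2 * \<omega>"
      "majorant_sq_over_w k (Suc \<nu>) \<omega> J x = 4 * \<omega> * pp k * ((1 + eps k) / (4 * eps k))"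
  | (child) j where "j \<le> k-2" "x \<in> ico (third (subI J j) 2)"
      "wnu k (Suc \<nu>) \<omega> \<sigma> J x = wnu k \<nu> (2 * \<omega>) (\<sigma> / 2) (third (subI J j) 2) x"
      "majorant k (Suc \<nu>) \<omega> J x = majorant k \<nu> (2 * \<omega>) (third (subI J j) 2) x"
      "majorant_sq_over_w k (Suc \<nu>) \<omega> J x
         = majorant_sq_over_w k \<nu> (2 * \<omega>) (third (subI J j) 2) x"
proof (cases rule: position_cases[where x=x and J=J and k=k])
  case outside
  then show ?thesis
    using that(1) wnu_outside majorant_outside majorant_sq_over_w_outside by blast
next
  case top
  then show ?thesis using that(2) assms
    by (simp add: wnu_Suc_layer majorant.simps(2) majorant_sq_over_w.simps(2) layer_top
        wnu_outside majorant_outside majorant_sq_over_w_outside)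
next
  case last
  then have "\<forall>m\<le>k-2. x \<notin> ico (third (subI J m) 2)"
    using ico_last_third_disjoint[OF assms] by auto
  with last show ?thesis using that(3) assms
    by (simp add: wnu_Suc_layer majorant.simps(2) majorant_sq_over_w.simps(2) layer_last
        wnu_outside majorant_outside majorant_sq_over_w_outside)
next
  case (child j)
  then show ?thesis using that(4) assms
    by (simp add: wnu_Suc_layer majorant.simps(2) majorant_sq_over_w.simps(2) layer_child
        sum_children_at[of _ j] wnu_outside majorant_outside majorant_sq_over_w_outside)
qed

lemma sq_double_div_eq: "(2 * a)\<^sup>2 / (a / b) = 4 * a * (b::real)"
  by (cases "a = 0"; cases "b = 0") (simp_all add: power2_eq_square)

lemma majorant_sq_div_wnu:
  assumes "2 \<le> k"
  shows "(majorant k \<nu> \<omega> J x)\<^sup>2 / wnu k \<nu> \<omega> \<sigma> J x = majorant_sq_over_w k \<nu> \<omega> J x"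
proof (induction \<nu> arbitrary: \<omega> \<sigma> J)
  case 0
  consider (left) "x \<in> ico (lefthalf J)" "x \<notin> ico (righthalf J)" "x \<in> ico J"
    | (right) "x \<notin> ico (lefthalf J)" "x \<in> ico (righthalf J)" "x \<in> ico J"
    | (outside) "x \<notin> ico J"
    using ico_halves[of J] ico_halves_disjoint[of J] by blast
  then show ?case
  proof cases
    case left
    then have "wnu k 0 \<omega> \<sigma> J x = \<omega> / (sqrt (pp k) / uu k)"
      "majorant_sq_over_w k 0 \<omega> J x = 4 * \<omega> * (sqrt (pp k) / uu k)" "majorant k 0 \<omega> J x = 2 * \<omega>"
      by (simp_all add: w0_def)
    then show ?thesis by (simp only: sq_double_div_eq)
  next
    case right
    then have "wnu k 0 \<omega> \<sigma> J x = \<omega> / (sqrt (pp k) * uu k)"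
      "majorant_sq_over_w k 0 \<omega> J x = 4 * \<omega> * (sqrt (pp k) * uu k)" "majorant k 0 \<omega> J x = 2 * \<omega>"
      by (simp_all add: w0_def)
    then show ?thesis by (simp only: sq_double_div_eq)
  next
    case outside
    then show ?thesis
      by (simp add: wnu_outside majorant_outside majorant_sq_over_w_outside
          del: wnu.simps majorant.simps majorant_sq_over_w.simps)
  qed
next
  case (Suc \<nu>)
  show ?case
  proof (cases rule: Suc_level_cases[OF assms, where x=x and J=J and \<nu>=\<nu> and \<omega>=\<omega> and \<sigma>=\<sigma>,
        case_names outside top last child])
    case top
    then show ?thesis by (simp only: sq_double_div_eq)
  next
    case last
    have "\<omega> / pp k * (4 * eps k / (1 + eps k)) = \<omega> / (pp k * ((1 + eps k) / (4 * eps k)))"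
      by simp
    with last show ?thesis by (simp only: sq_double_div_eq mult.assoc)
  qed (simp_all add: Suc.IH)
qed

section \<open>Integrals over a carrying interval\<close>

lemma has_bochner_integral_wnu:
  assumes "2 \<le> k" "fst J \<le> snd J"
  shows "has_bochner_integral lborel (wnu k \<nu> \<omega> \<sigma> J) (\<omega> * (snd J - fst J))"
  using assms(2)
proof (induction \<nu> arbitrary: \<omega> \<sigma> J)
  case 0
  have halves: "fst (lefthalf J) \<le> snd (lefthalf J)" "fst (righthalf J) \<le> snd (righthalf J)"
    "snd (lefthalf J) - fst (lefthalf J) = (snd J - fst J) / 2"
    "snd (righthalf J) - fst (righthalf J) = (snd J - fst J) / 2"
    using 0 by (auto simp: lefthalf_def righthalf_def field_simps)
  have "uu k * ((snd J - fst J) / 2) + 1 / uu k * ((snd J - fst J) / 2)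
      = (uu k + 1 / uu k) * ((snd J - fst J) / 2)"
    by (rule distrib_right[symmetric])
  also have "\<dots> = sqrt (pp k) * (snd J - fst J)"
    using uu_add_inverse[OF assms(1)] by simp
  finally have integral_eq: "\<omega> / sqrt (pp k) * (uu k * ((snd J - fst J) / 2) + 1 / uu k * ((snd J - fst J) / 2))
      = \<omega> * (snd J - fst J)"
    using one_less_pp[OF assms(1)] by simp
  have "has_bochner_integral lborel (wnu k 0 \<omega> \<sigma> J)
      (\<omega> / sqrt (pp k) * (uu k * ((snd J - fst J) / 2) + 1 / uu k * ((snd J - fst J) / 2)))"
    unfolding wnu.simps w0_def
    by (intro has_bochner_integral_mult_right has_bochner_integral_add
        has_bochner_integral_indicator_ico[of "lefthalf J", unfolded halves(3)]
        has_bochner_integral_indicator_ico[of "righthalf J", unfolded halves(4)] halves(1,2))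
  then show ?case unfolding integral_eq .
next
  case (Suc \<nu>)
  let ?L = "snd J - fst J"
  have layer: "has_bochner_integral lborel (layer k (\<omega> / pp k) (4 * eps k / (1 + eps k)) J)
      (\<omega> / pp k * ?L * (3 * eps k * pp k))"
    using has_bochner_integral_layer[OF assms(1) Suc.prems, of "\<omega> / pp k" "4 * eps k / (1 + eps k)"]
    unfolding layer_weight_eq .
  have child: "has_bochner_integral lborel (wnu k \<nu> (2 * \<omega>) (\<sigma> / 2) (third (subI J m) 2))
      (2 * \<omega> * ?L / 3 ^ Suc m)" for m
    using Suc.IH[OF third_subI_le[OF Suc.prems], of "2 * \<omega>" "\<sigma> / 2" m 2]
    unfolding length_third_subI by simp
  have "has_bochner_integral lborel (\<lambda>x. layer k (\<omega> / pp k) (4 * eps k / (1 + eps k)) J x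
          + (\<Sum>m = 0..k - 2. wnu k \<nu> (2 * \<omega>) (\<sigma> / 2) (third (subI J m) 2) x))
      (\<omega> / pp k * ?L * (3 * eps k * pp k) + 2 * \<omega> * ?L * (1 - 3 * eps k) / 2)"
    by (intro has_bochner_integral_add layer has_bochner_integral_children[OF assms(1) Suc.prems child])
  moreover have "\<omega> / pp k * ?L * (3 * eps k * pp k) + 2 * \<omega> * ?L * (1 - 3 * eps k) / 2 = \<omega> * ?L"
    using one_less_pp[OF assms(1)] by (simp add: field_simps)
  ultimately show ?case by (simp add: wnu_Suc_layer[abs_def])
qed

fun energy_factor :: "nat \<Rightarrow> nat \<Rightarrow> real" where
  "energy_factor k 0 = 4"
| "energy_factor k (Suc \<nu>) = 3 * (1 + eps k) + (1 - 3 * eps k) * energy_factor k \<nu>"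

lemma energy_factor_le: "2 \<le> k \<Longrightarrow> energy_factor k \<nu> \<le> (1 + eps k) / eps k"
proof (induction \<nu>)
  case 0
  then show ?case using eps_le[of k] eps_pos[of k] by (simp add: field_simps)
next
  case (Suc \<nu>)
  have e: "0 < eps k" "eps k \<le> 1 / 9" using eps_pos eps_le[OF Suc.prems] by auto
  then have "(1 - 3 * eps k) * energy_factor k \<nu> \<le> (1 - 3 * eps k) * ((1 + eps k) / eps k)"
    using Suc by (intro mult_left_mono) auto
  moreover have "3 * (1 + eps k) + (1 - 3 * eps k) * ((1 + eps k) / eps k) = (1 + eps k) / eps k"
    using e by (simp add: field_simps)
  ultimately show ?case by simp
qed

lemma has_bochner_integral_majorant_sq_over_w:
  assumes "2 \<le> k" "fst J \<le> snd J"
  shows "has_bochner_integral lborel (majorant_sq_over_w k \<nu> \<omega> J)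
           (energy_factor k \<nu> * pp k * \<omega> * (snd J - fst J))"
  using assms(2)
proof (induction \<nu> arbitrary: \<omega> J)
  case 0
  have halves: "fst (lefthalf J) \<le> snd (lefthalf J)" "fst (righthalf J) \<le> snd (righthalf J)"
    "snd (lefthalf J) - fst (lefthalf J) = (snd J - fst J) / 2"
    "snd (righthalf J) - fst (righthalf J) = (snd J - fst J) / 2"
    using 0 by (auto simp: lefthalf_def righthalf_def field_simps)
  have "(snd J - fst J) / 2 / uu k + uu k * ((snd J - fst J) / 2)
      = (uu k + 1 / uu k) * ((snd J - fst J) / 2)"
    using one_le_uu[OF assms(1)] by (simp add: field_simps)
  also have "\<dots> = sqrt (pp k) * (snd J - fst J)"
    using uu_add_inverse[OF assms(1)] by simp
  finally have integral_eq: "4 * \<omega> * sqrt (pp k) * ((snd J - fst J) / 2 / uu k + uu k * ((snd J - fst J) / 2))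
      = energy_factor k 0 * pp k * \<omega> * (snd J - fst J)"
    using one_less_pp[OF assms(1)] by simp
  have "has_bochner_integral lborel (majorant_sq_over_w k 0 \<omega> J)
      (4 * \<omega> * sqrt (pp k) * ((snd J - fst J) / 2 / uu k + uu k * ((snd J - fst J) / 2)))"
    unfolding majorant_sq_over_w.simps
    by (intro has_bochner_integral_mult_right has_bochner_integral_add has_bochner_integral_divide_zero
        has_bochner_integral_indicator_ico[of "lefthalf J", unfolded halves(3)]
        has_bochner_integral_indicator_ico[of "righthalf J", unfolded halves(4)] halves(1,2))
  then show ?case unfolding integral_eq .
next
  case (Suc \<nu>)
  let ?L = "snd J - fst J"
  have layer: "has_bochner_integral lborel (layer k (4 * \<omega> * pp k) ((1 + eps k) / (4 * eps k)) J)
      (4 * \<omega> * pp k * ?L * ((1 - 3 * eps k) / 2 + 2 * eps k + (1 + eps k) / (4 * eps k) * eps k))"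
    by (rule has_bochner_integral_layer[OF assms(1) Suc.prems])
  have child: "has_bochner_integral lborel (majorant_sq_over_w k \<nu> (2 * \<omega>) (third (subI J m) 2))
      (energy_factor k \<nu> * pp k * (2 * \<omega>) * ?L / 3 ^ Suc m)" for m
    using Suc.IH[OF third_subI_le[OF Suc.prems], of "2 * \<omega>" m 2]
    unfolding length_third_subI by simp
  have "has_bochner_integral lborel (\<lambda>x. layer k (4 * \<omega> * pp k) ((1 + eps k) / (4 * eps k)) J x
          + (\<Sum>m = 0..k - 2. majorant_sq_over_w k \<nu> (2 * \<omega>) (third (subI J m) 2) x))
      (4 * \<omega> * pp k * ?L * ((1 - 3 * eps k) / 2 + 2 * eps k + (1 + eps k) / (4 * eps k) * eps k)
        + energy_factor k \<nu> * pp k * (2 * \<omega>) * ?L * (1 - 3 * eps k) / 2)"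
    by (intro has_bochner_integral_add layer has_bochner_integral_children[OF assms(1) Suc.prems child])
  moreover have "4 * \<omega> * pp k * ?L * ((1 - 3 * eps k) / 2 + 2 * eps k + (1 + eps k) / (4 * eps k) * eps k)
        + energy_factor k \<nu> * pp k * (2 * \<omega>) * ?L * (1 - 3 * eps k) / 2
      = energy_factor k (Suc \<nu>) * pp k * \<omega> * ?L"
    using eps_pos[of k] by (simp add: field_simps)
  ultimately show ?case by (simp add: majorant_sq_over_w.simps(2)[abs_def])
qed

section \<open>The estimate on I_m\<close>

lemma base_level_ineqs:
  fixes q u \<omega> :: real
  assumes q: "1 \<le> q" and u: "1 \<le> u" "u \<le> 2 * q" and \<omega>: "0 \<le> \<omega>"
  shows "4 * \<omega> * q / u \<le> 30 * (q\<^sup>2)\<^sup>2 * (\<omega> / q * u)"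
    and "4 * \<omega> * q * u \<le> 30 * (q\<^sup>2)\<^sup>2 * (\<omega> / q / u)"
proof -
  have qq: "1 \<le> q * q" using mult_mono[OF q q] q by simp
  have "4 * \<omega> * q * (1 / u) \<le> 4 * \<omega> * q * 1"
    using q u \<omega> by (intro mult_left_mono) auto
  then have "4 * \<omega> * q / u \<le> 4 * \<omega> * q" by simp
  also have "\<dots> \<le> 30 * \<omega> * q * (q * q * u)"
  proof -
    have "\<omega> * q * 1 \<le> \<omega> * q * (q * q * u)"
      using mult_mono[OF qq u(1)] q \<omega> by (intro mult_left_mono) auto
    moreover have "0 \<le> \<omega> * q" using q \<omega> by simp
    ultimately show ?thesis by linarith
  qed
  also have "\<dots> = 30 * (q\<^sup>2)\<^sup>2 * (\<omega> / q * u)" using q by (simp add: field_simps power2_eq_square)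
  finally show "4 * \<omega> * q / u \<le> 30 * (q\<^sup>2)\<^sup>2 * (\<omega> / q * u)" .
  have "u * u \<le> 4 * (q * q)" using mult_mono[OF u(2) u(2)] u q by simp
  moreover have "0 \<le> \<omega> * q" "0 \<le> \<omega> * q * (q * q)" using q \<omega> by simp_all
  ultimately have "\<omega> * q * (u * u) \<le> \<omega> * q * (4 * (q * q))" by (intro mult_left_mono)
  then have "4 * \<omega> * q * (u * u) \<le> 30 * \<omega> * q * (q * q)"
    using \<open>0 \<le> \<omega> * q * (q * q)\<close> by linarith
  then show "4 * \<omega> * q * u \<le> 30 * (q\<^sup>2)\<^sup>2 * (\<omega> / q / u)"
    using q u by (simp add: field_simps power2_eq_square)
qed

lemma majorant_sq_over_w_0_le:
  assumes "2 \<le> k" "0 \<le> \<omega>"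
  shows "majorant_sq_over_w k 0 \<omega> J x \<le> 30 * (pp k)\<^sup>2 * wnu k 0 \<omega> \<sigma> J x"
proof -
  have q: "1 \<le> sqrt (pp k)" "(sqrt (pp k))\<^sup>2 = pp k" using one_less_pp[OF assms(1)] by auto
  note ineqs = base_level_ineqs[OF q(1) one_le_uu[OF assms(1)] uu_le assms(2), unfolded q(2)]
  consider (left) "x \<in> ico (lefthalf J)" "x \<notin> ico (righthalf J)"
    | (right) "x \<notin> ico (lefthalf J)" "x \<in> ico (righthalf J)"
    | (outside) "x \<notin> ico (lefthalf J)" "x \<notin> ico (righthalf J)"
    using ico_halves_disjoint[of J] by blast
  then show ?thesis
  proof cases
    case left
    then show ?thesis using ineqs(1) by (simp add: w0_def)
  next
    case right
    then show ?thesis using ineqs(2) by (simp add: w0_def)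
  qed (simp add: w0_def)
qed

lemma majorant_sq_over_w_Suc_le:
  assumes "2 \<le> k" "0 \<le> \<omega>" "m0 \<le> k - 2"
  shows "indicator (ico (subI J m0)) x * majorant_sq_over_w k (Suc \<nu>) \<omega> J x
    \<le> 30 * (pp k)\<^sup>2 * (indicator (ico (subI J m0)) x * wnu k (Suc \<nu>) \<omega> \<sigma> J x)
      + 4 * \<omega> * pp k * ((1 + eps k) / (4 * eps k)) * indicator (ico (third (subI J (k - 1)) 3)) x
      + (\<Sum>m = m0..k - 2. majorant_sq_over_w k \<nu> (2 * \<omega>) (third (subI J m) 2) x
           - 30 * (pp k)\<^sup>2 * wnu k \<nu> (2 * \<omega>) (\<sigma> / 2) (third (subI J m) 2) x)"
    (is "?S * ?G \<le> 30 * (pp k)\<^sup>2 * (?S * ?w) + ?q + sum ?D _")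
proof -
  have p: "1 < pp k" by (rule one_less_pp[OF assms(1)])
  have D_outside: "?D m = 0" if "x \<notin> ico (third (subI J m) 2)" for m
    using that by (simp add: wnu_outside majorant_sq_over_w_outside)
  have D_zero: "sum ?D {m0..k - 2} = 0" if "\<forall>m\<le>k-2. x \<notin> ico (third (subI J m) 2)"
    using that D_outside by (intro sum.neutral) auto
  have q: "0 \<le> ?q" using assms(2) p eps_pos[of k] by simp
  have w: "0 \<le> 30 * (pp k)\<^sup>2 * (?S * ?w)" using wnu_nonneg[OF assms(1,2)] by simp
  show ?thesis
  proof (cases rule: Suc_level_cases[OF assms(1), where x=x and J=J and \<nu>=\<nu> and \<omega>=\<omega> and \<sigma>=\<sigma>,
        case_names outside top last child])
    case outside
    then have "x \<notin> ico (subI J m0)" "\<forall>m\<le>k-2. x \<notin> ico (third (subI J m) 2)"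
      using ico_subI_antimono[of 0 m0 J] ico_third_subI_subset[of 2 J] by auto
    then show ?thesis using q D_zero by simp
  next
    case top
    have "4 * \<omega> * pp k \<le> 30 * (pp k)\<^sup>2 * (\<omega> / pp k)"
      using assms(2) p by (simp add: power2_eq_square)
    then have "?S * ?G \<le> 30 * (pp k)\<^sup>2 * (?S * ?w)"
      using top by (simp add: indicator_def)
    then show ?thesis using q D_zero top(2) by simp
  next
    case last
    have "?S * ?G \<le> ?q" using last q by (simp add: indicator_def)
    then show ?thesis using w D_zero[OF last(2)] by linarith
  next
    case (child j)
    show ?thesis
    proof (cases "m0 \<le> j")
      case True
      have "j \<in> {m0..k - 2}" using True child(1) by simp
      then have "sum ?D {m0..k - 2} = ?D j"
        using sum_children_at[OF _ _ child(2), of _ ?D] D_outside by blast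
      moreover have "?S = 1" using True child_mem_subI_iff[OF child(2)] by simp
      ultimately show ?thesis using q unfolding child(3,5) by simp
    next
      case False
      have "?D m = 0" if "m \<in> {m0..k - 2}" for m
        using that False child(2) D_outside third_subI_band_unique[of 2 2 x J m j] by force
      then have "sum ?D {m0..k - 2} = 0" by (rule sum.neutral[OF ballI])
      moreover have "?S = 0" using False child_mem_subI_iff[OF child(2)] by simp
      ultimately show ?thesis using q by simp
    qed
  qed
qed

lemma energy_budget:
  assumes "2 \<le> k" "m0 \<le> k - 2" "0 \<le> \<omega>" "0 \<le> L" "g \<le> 6 * pp k"
  shows "4 * \<omega> * pp k * ((1 + eps k) / (4 * eps k)) * (L * eps k)
    + (\<Sum>m = m0..k - 2. g * pp k * (2 * \<omega>) * (L / 3 ^ Suc m) - 30 * (pp k)\<^sup>2 * (2 * \<omega> * (L / 3 ^ Suc m)))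
    \<le> 0" (is "?c * (L * eps k) + sum ?t _ \<le> 0")
proof -
  let ?p = "pp k" and ?e = "eps k"
  have p: "0 < ?p" using one_less_pp[OF assms(1)] by simp
  have factor: "?t m = 2 * \<omega> * (L / 3 ^ Suc m) * ?p * (g - 30 * ?p)" for m
  proof -
    have "g * ?p * (2 * \<omega>) * h - 30 * ?p\<^sup>2 * (2 * \<omega> * h) = 2 * \<omega> * h * ?p * (g - 30 * ?p)" for h
      by (simp add: algebra_simps power2_eq_square)
    then show ?thesis .
  qed
  have "0 \<le> 2 * \<omega> * (L / 3 ^ Suc m) * ?p" for m using assms(3,4) p by simp
  moreover have "g - 30 * ?p \<le> 0" using assms(5) p by simp
  ultimately have "?t m \<le> 0" for m unfolding factor by (rule mult_nonneg_nonpos)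
  then have "sum ?t {m0..k - 2} \<le> ?t (k - 2)" using assms(2) by (intro sum_le_last)
  moreover have "Suc (k - 2) = k - 1" using assms(1) by arith
  then have "?t (k - 2) = 6 * \<omega> * L * ?e * ?p * (g - 30 * ?p)"
    unfolding factor using assms(1) eps_pred[of k L] by simp
  moreover have "6 * \<omega> * L * ?e * ?p * (g - 30 * ?p) \<le> 6 * \<omega> * L * ?e * ?p * (6 * ?p - 30 * ?p)"
    using assms(3-5) eps_pos[of k] p by (intro mult_left_mono) auto
  moreover have "?c * (L * ?e) = \<omega> * ?p * L * (1 + ?e)"
    using eps_pos[of k] by (simp add: field_simps)
  moreover have "1 + ?e \<le> 6 * ?p * ?e"
    using eps_ratio_le_pp[of k] eps_pos[of k] by (simp add: divide_le_eq)
  then have "\<omega> * ?p * L * (1 + ?e) \<le> \<omega> * ?p * L * (6 * ?p * ?e)"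
    using assms(3,4) p by (intro mult_left_mono) auto
  moreover have "0 \<le> \<omega> * ?p * L * (6 * ?p * ?e)" using assms(3,4) p eps_pos[of k] by simp
  ultimately show ?thesis by (simp add: algebra_simps power2_eq_square)
qed

lemma integral_subI_majorant_sq_over_w_Suc_le:
  assumes "2 \<le> k" "fst J \<le> snd J" "0 \<le> \<omega>" "m0 \<le> k - 2"
  defines "S \<equiv> indicator (ico (subI J m0)) :: real \<Rightarrow> real"
  shows "(\<integral>x. S x * majorant_sq_over_w k (Suc \<nu>) \<omega> J x \<partial>lborel)
           \<le> 30 * (pp k)\<^sup>2 * (\<integral>x. S x * wnu k (Suc \<nu>) \<omega> \<sigma> J x \<partial>lborel)"
proof -
  let ?L = "snd J - fst J" and ?p = "pp k" and ?e = "eps k"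
  let ?c = "4 * \<omega> * ?p * ((1 + ?e) / (4 * ?e))"
  let ?D = "\<lambda>m x. majorant_sq_over_w k \<nu> (2 * \<omega>) (third (subI J m) 2) x
               - 30 * ?p\<^sup>2 * wnu k \<nu> (2 * \<omega>) (\<sigma> / 2) (third (subI J m) 2) x"
  let ?t = "\<lambda>m. energy_factor k \<nu> * ?p * (2 * \<omega>) * (?L / 3 ^ Suc m)
               - 30 * ?p\<^sup>2 * (2 * \<omega> * (?L / 3 ^ Suc m))"
  define A where "A = (\<integral>x. S x * wnu k (Suc \<nu>) \<omega> \<sigma> J x \<partial>lborel)"
  have hA: "has_bochner_integral lborel (\<lambda>x. S x * wnu k (Suc \<nu>) \<omega> \<sigma> J x) A"
    using integrable_indicator_times[OF has_bochner_integral_wnu[OF assms(1,2)]]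
    by (simp add: A_def S_def has_bochner_integral_iff)
  have "?L / 3 ^ Suc (k - 1) = ?L * ?e" using assms(1) eps_Suc_pred[of k ?L] by simp
  then have hq: "has_bochner_integral lborel (\<lambda>x. ?c * indicator (ico (third (subI J (k - 1)) 3)) x)
      (?c * (?L * ?e))"
    using has_bochner_integral_indicator_third_subI[OF assms(2), of "k - 1" 3]
    by (intro has_bochner_integral_mult_right) simp
  have hD: "has_bochner_integral lborel (?D m) (?t m)" for m
    using has_bochner_integral_majorant_sq_over_w[OF assms(1) third_subI_le[OF assms(2)], of \<nu> "2 * \<omega>" m 2]
      has_bochner_integral_wnu[OF assms(1) third_subI_le[OF assms(2)], of \<nu> "2 * \<omega>" "\<sigma> / 2" m 2]
    unfolding length_third_subI by (intro has_bochner_integral_diff has_bochner_integral_mult_right)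
  let ?R = "\<lambda>x. 30 * ?p\<^sup>2 * (S x * wnu k (Suc \<nu>) \<omega> \<sigma> J x)
         + ?c * indicator (ico (third (subI J (k - 1)) 3)) x + (\<Sum>m = m0..k - 2. ?D m x)"
  have R: "has_bochner_integral lborel ?R (30 * ?p\<^sup>2 * A + ?c * (?L * ?e) + (\<Sum>m = m0..k - 2. ?t m))"
    by (intro has_bochner_integral_add has_bochner_integral_mult_right hA hq has_bochner_integral_sum hD)
  have "(\<integral>x. S x * majorant_sq_over_w k (Suc \<nu>) \<omega> J x \<partial>lborel) \<le> integral\<^sup>L lborel ?R"
    using majorant_sq_over_w_Suc_le[OF assms(1,3,4), of J _ \<nu> \<sigma>]
      integrable_indicator_times[OF has_bochner_integral_majorant_sq_over_w[OF assms(1,2)]]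
    unfolding S_def by (intro integral_mono integrable.intros[OF R[unfolded S_def]])
  also have "\<dots> = 30 * ?p\<^sup>2 * A + (?c * (?L * ?e) + (\<Sum>m = m0..k - 2. ?t m))"
    using has_bochner_integral_integral_eq[OF R] by simp
  also have "\<dots> \<le> 30 * ?p\<^sup>2 * A"
    using energy_budget[OF assms(1,4,3), of ?L "energy_factor k \<nu>"] assms(2)
      order_trans[OF energy_factor_le[OF assms(1)] eps_ratio_le_pp] by simp
  finally show ?thesis unfolding A_def .
qed

lemma set_integral_majorant_sq_over_w_le:
  assumes "2 \<le> k" "fst J \<le> snd J" "0 \<le> \<omega>" "m0 \<le> k - 2"
  shows "(LINT x:ico (subI J m0)|lborel. majorant_sq_over_w k \<nu> \<omega> J x)
           \<le> 30 * (pp k)\<^sup>2 * (LINT x:ico (subI J m0)|lborel. wnu k \<nu> \<omega> \<sigma> J x)"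
proof -
  let ?S = "indicator (ico (subI J m0)) :: real \<Rightarrow> real"
  have "(\<integral>x. ?S x * majorant_sq_over_w k \<nu> \<omega> J x \<partial>lborel)
      \<le> 30 * (pp k)\<^sup>2 * (\<integral>x. ?S x * wnu k \<nu> \<omega> \<sigma> J x \<partial>lborel)"
  proof (cases \<nu>)
    case 0
    have int_G: "integrable lborel (\<lambda>x. ?S x * majorant_sq_over_w k 0 \<omega> J x)"
      by (rule integrable_indicator_times[OF has_bochner_integral_majorant_sq_over_w[OF assms(1,2)]])
    have int_w: "integrable lborel (\<lambda>x. ?S x * wnu k 0 \<omega> \<sigma> J x)"
      by (rule integrable_indicator_times[OF has_bochner_integral_wnu[OF assms(1,2)]])
    have "(\<integral>x. ?S x * majorant_sq_over_w k 0 \<omega> J x \<partial>lborel)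
        \<le> (\<integral>x. 30 * (pp k)\<^sup>2 * (?S x * wnu k 0 \<omega> \<sigma> J x) \<partial>lborel)"
      using majorant_sq_over_w_0_le[OF assms(1,3)]
      by (intro integral_mono int_G integrable_mult_right int_w) (simp add: indicator_def)
    then show ?thesis unfolding 0 by simp
  next
    case (Suc \<nu>')
    then show ?thesis using integral_subI_majorant_sq_over_w_Suc_le[OF assms] by simp
  qed
  then show ?thesis by (simp add: set_lebesgue_integral_def)
qed

section \<open>Carrying intervals and wtilde\<close>

definition shift :: "real \<Rightarrow> real \<times> real \<Rightarrow> real \<times> real" where
  "shift c J = (fst J + c, snd J + c)"

lemma shift_subI: "subI (shift c J) m = shift c (subI J m)"
  by (simp add: subI_def shift_def)

lemma shift_third: "third (shift c J) i = shift c (third J i)"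
  by (simp add: third_def shift_def algebra_simps)

lemma shift_halves: "lefthalf (shift c J) = shift c (lefthalf J)" "righthalf (shift c J) = shift c (righthalf J)"
  by (simp_all add: lefthalf_def righthalf_def shift_def field_simps)

lemma mem_ico_shift: "x + c \<in> ico (shift c J) \<longleftrightarrow> x \<in> ico J"
  by (simp add: ico_def shift_def)

lemma wnu_shift: "wnu k \<nu> \<omega> \<sigma> (shift c J) (x + c) = wnu k \<nu> \<omega> \<sigma> J x"
proof (induction \<nu> arbitrary: \<omega> \<sigma> J)
  case 0 then show ?case by (simp add: w0_def shift_halves indicator_def mem_ico_shift)
next
  case (Suc \<nu>) then show ?case
    by (simp add: wnu.simps(2) shift_subI shift_third indicator_def mem_ico_shift)
qed

lemma carries_le_nn: "carries k \<nu> I \<Longrightarrow> \<nu> \<le> nn k"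
  by (induction rule: carries.induct) auto

lemma carries_fst_le_snd: "carries k \<nu> I \<Longrightarrow> fst I \<le> snd I"
  by (induction rule: carries.induct) (auto intro: third_subI_le)

lemma ww_eq_wnu_unit_interval:
  assumes "x \<in> ico (real_of_int j, real_of_int j + 1)"
  shows "ww k x = wnu k (nn k) 1 (pp k) (real_of_int j, real_of_int j + 1) x"
proof -
  have "frac x = x - real_of_int j" using assms by (simp add: ico_def frac_def floor_eq_iff)
  moreover have "(real_of_int j, real_of_int j + 1) = shift (real_of_int j) (0, 1)"
    by (simp add: shift_def)
  ultimately show ?thesis
    using wnu_shift[of k "nn k" 1 "pp k" "real_of_int j" "(0, 1)" "x - real_of_int j"]
    by (simp add: ww_def)
qed

lemma carries_ww_eq_wnu:
  assumes "2 \<le> k" "carries k \<nu> I"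
  shows "\<exists>\<sigma>. \<forall>x\<in>ico I. ww k x = wnu k \<nu> (2 ^ (nn k - \<nu>)) \<sigma> I x"
  using assms(2)
proof (induction rule: carries.induct)
  case (base j)
  then show ?case using ww_eq_wnu_unit_interval by auto
next
  case (step \<nu> I m)
  then obtain \<sigma> where ww: "\<forall>x\<in>ico I. ww k x = wnu k (Suc \<nu>) (2 ^ (nn k - Suc \<nu>)) \<sigma> I x" by blast
  have "2 * (2::real) ^ (nn k - Suc \<nu>) = 2 ^ (nn k - \<nu>)"
    using carries_le_nn[OF step.hyps(1)] by (simp add: Suc_diff_Suc flip: power_Suc)
  moreover have "wnu k (Suc \<nu>) \<omega> \<sigma> I x = wnu k \<nu> (2 * \<omega>) (\<sigma> / 2) (third (subI I m) 2) x"
    if "x \<in> ico (third (subI I m) 2)" for x \<omega>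
  proof (cases rule: Suc_level_cases[OF assms(1), where x=x and J=I and \<nu>=\<nu> and \<omega>=\<omega> and \<sigma>=\<sigma>,
        case_names outside top last child])
    case outside then show ?thesis using that ico_third_subI_subset[of 2 I m] by auto
  next
    case (child j)
    then show ?thesis using that third_subI_band_unique[of 2 2 x I j m] by simp
  qed (use that step.hyps(2) in auto)
  ultimately show ?case using ww ico_third_subI_subset[of 2 I m] by (intro exI[of _ "\<sigma> / 2"]) auto
qed

lemma carries_unique:
  assumes "carries k \<nu> I" "carries k \<nu> J" "x \<in> ico I" "x \<in> ico J"
  shows "I = J"
  using assms
proof (induction arbitrary: J rule: carries.induct)
  case (base j)
  from base.prems(1) show ?case
  proof cases
    case (base j')
    then show ?thesis using base.prems(2,3) by (auto simp: ico_def floor_eq_iff)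
  next
    case (step I' m)
    then show ?thesis using carries_le_nn by fastforce
  qed
next
  case (step \<nu> I m)
  note IH = step.IH and hyps = step.hyps and prems = step.prems
  from prems(1) show ?case
  proof cases
    case base
    then show ?thesis using carries_le_nn[OF hyps(1)] by simp
  next
    case (step J' m')
    have "x \<in> ico I" "x \<in> ico J'"
      using prems(2,3) step(1) ico_third_subI_subset[of 2] by blast+
    then have "I = J'" using IH step(2) by blast
    moreover have "m = m'"
      using prems(2,3) step(1) calculation third_subI_band_unique[of 2 2 x I m m'] by simp
    ultimately show ?thesis using step(1) by simp
  qed
qed

lemma suppw_mono:
  assumes "\<nu> \<le> \<nu>'" "\<nu>' \<le> nn k"
  shows "suppw k \<nu> \<subseteq> suppw k \<nu>'"
  using assms
proof (induction \<nu>' rule: dec_induct)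
  case (step \<nu>')
  have "suppw k \<nu>' \<subseteq> suppw k (Suc \<nu>')"
  proof
    fix x assume "x \<in> suppw k \<nu>'"
    then obtain K where "carries k \<nu>' K" "x \<in> ico K" by (auto simp: suppw_def)
    then show "x \<in> suppw k (Suc \<nu>')"
    proof cases
      case (step I m)
      then show ?thesis
        using \<open>x \<in> ico K\<close> ico_third_subI_subset[of 2 I m] unfolding suppw_def by blast
    qed (use step.prems in auto)
  qed
  then show ?case using step by auto
qed simp

lemma wtilde_nonneg: "0 \<le> wtilde k x"
  unfolding wtilde_def by (intro add_nonneg_nonneg sum_nonneg) auto

lemma wtilde_le_outside_suppw:
  assumes "\<nu> \<le> nn k" "\<nu> = 0 \<or> x \<notin> suppw k (\<nu> - 1)"
  shows "wtilde k x \<le> 2 ^ (nn k - \<nu> + 1)"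
proof -
  let ?n = "nn k"
  define D where "D l = suppw k (?n - (l - 1)) - suppw k (?n - l)" for l
  have D_level: "l \<le> ?n - \<nu> + 1" if "l \<in> {1..?n}" "x \<in> D l" for l
  proof (rule ccontr)
    assume "\<not> l \<le> ?n - \<nu> + 1"
    then have "\<nu> \<noteq> 0" "?n - (l - 1) \<le> \<nu> - 1" using that(1) by auto
    moreover have "suppw k (?n - (l - 1)) \<subseteq> suppw k (\<nu> - 1)"
      using calculation(2) assms(1) by (intro suppw_mono) auto
    ultimately show False using that(2) assms(2) by (auto simp: D_def)
  qed
  have D_unique: "l = l'" if "l \<in> {1..?n}" "l' \<in> {1..?n}" "x \<in> D l" "x \<in> D l'" for l l'
  proof -
    have False if "a < b" "b \<le> ?n" "x \<in> D a" "x \<in> D b" for a b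
    proof -
      have "suppw k (?n - (b - 1)) \<subseteq> suppw k (?n - a)" using that(1,2) by (intro suppw_mono; arith)
      then show False using that(3,4) by (auto simp: D_def)
    qed
    then show ?thesis using that by (metis atLeastAtMost_iff linorder_neqE_nat)
  qed
  have wt: "wtilde k x = (\<Sum>l = 1..?n. 2 ^ l * indicator (D l) x) + 2 ^ (?n + 1) * indicator (suppw k 0) x"
    by (simp add: wtilde_def D_def)
  show ?thesis
  proof (cases "\<exists>l\<in>{1..?n}. x \<in> D l")
    case True
    then obtain l where l: "l \<in> {1..?n}" "x \<in> D l" by blast
    then have "x \<notin> suppw k 0"
      using suppw_mono[of 0 "?n - l" k] by (auto simp: D_def)
    moreover have "(\<Sum>l = 1..?n. 2 ^ l * indicator (D l) x) = (2::real) ^ l * indicator (D l) x"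
    proof (rule sum_eq_single)
      fix l' assume "l' \<in> {1..?n}" "l' \<noteq> l"
      then have "x \<notin> D l'" using D_unique l by blast
      then show "(2::real) ^ l' * indicator (D l') x = 0" by simp
    qed (use l in auto)
    ultimately have "wtilde k x = 2 ^ l" unfolding wt using l(2) by simp
    also have "(2::real) ^ l \<le> 2 ^ (?n - \<nu> + 1)" using D_level[OF l] by (intro power_increasing) auto
    finally show ?thesis .
  next
    case False
    then have "wtilde k x = 2 ^ (?n + 1) * indicator (suppw k 0) x" unfolding wt by simp
    moreover have "x \<notin> suppw k 0" if "\<nu> \<noteq> 0"
    proof -
      have "suppw k 0 \<subseteq> suppw k (\<nu> - 1)" using assms(1) by (intro suppw_mono) auto
      then show ?thesis using assms(2) that by auto
    qed
    ultimately show ?thesis by (cases "\<nu> = 0") (auto simp: indicator_def)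
  qed
qed

lemma wtilde_le_majorant:
  assumes "2 \<le> k" "carries k \<nu> I" "x \<in> ico I"
  shows "wtilde k x \<le> majorant k \<nu> (2 ^ (nn k - \<nu>)) I x"
  using assms(2,3)
proof (induction \<nu> arbitrary: I)
  case 0
  then show ?case using wtilde_le_outside_suppw[of 0 k x] by simp
next
  case (Suc \<nu>)
  have le: "Suc \<nu> \<le> nn k" by (rule carries_le_nn[OF Suc.prems(1)])
  have two_pow: "2 * (2::real) ^ (nn k - Suc \<nu>) = 2 ^ (nn k - \<nu>)"
    using le by (simp add: Suc_diff_Suc flip: power_Suc)
  have no_child: "wtilde k x \<le> 2 * 2 ^ (nn k - Suc \<nu>)"
    if "\<forall>m\<le>k-2. x \<notin> ico (third (subI I m) 2)"
  proof -
    have "x \<notin> suppw k \<nu>"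
    proof
      assume "x \<in> suppw k \<nu>"
      then obtain K where "carries k \<nu> K" "x \<in> ico K" by (auto simp: suppw_def)
      then show False
      proof cases
        case (step I' m)
        then have "x \<in> ico I'" using \<open>x \<in> ico K\<close> ico_third_subI_subset[of 2 I' m] by blast
        then have "I' = I" using carries_unique[OF step(2) Suc.prems(1) _ Suc.prems(2)] by simp
        then show False using step that \<open>x \<in> ico K\<close> by auto
      qed (use le in auto)
    qed
    then show ?thesis using wtilde_le_outside_suppw[OF le] by simp
  qed
  show ?case
  proof (cases rule: Suc_level_cases[OF assms(1), where x=x and J=I and \<nu>=\<nu> and \<omega>="2 ^ (nn k - Suc \<nu>)"
        and \<sigma>=1, case_names outside top last child])
    case (child j)
    then show ?thesis
      using Suc.IH[OF carries.step[OF Suc.prems(1) child(1)] child(2)] two_pow by simp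
  qed (use Suc.prems no_child in auto)
qed

lemma wtilde_sq_sig_le:
  assumes "2 \<le> k" "carries k \<nu> I" "x \<in> ico I" "ww k x = wnu k \<nu> (2 ^ (nn k - \<nu>)) \<sigma> I x"
  shows "(wtilde k x)\<^sup>2 * sig k x \<le> majorant_sq_over_w k \<nu> (2 ^ (nn k - \<nu>)) I x"
proof -
  let ?\<omega> = "2 ^ (nn k - \<nu>) :: real"
  have "(wtilde k x)\<^sup>2 \<le> (majorant k \<nu> ?\<omega> I x)\<^sup>2"
    using wtilde_le_majorant[OF assms(1-3)] wtilde_nonneg by (intro power_mono) simp_all
  then have "(wtilde k x)\<^sup>2 / wnu k \<nu> ?\<omega> \<sigma> I x \<le> (majorant k \<nu> ?\<omega> I x)\<^sup>2 / wnu k \<nu> ?\<omega> \<sigma> I x"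
    using wnu_nonneg[OF assms(1)] by (intro divide_right_mono) simp_all
  then show ?thesis using majorant_sq_div_wnu[OF assms(1)] assms(4) by (simp add: sig_def)
qed

theorem proposition4:
  fixes k l m :: nat and I :: "real \<times> real"
  assumes "k \<ge> 2"
    and "l \<le> nn k"
    and "carries k (nn k - l) I"
    and "m \<le> k - 2"
  shows "(LINT x:ico (subI I m)|lborel. (wtilde k x)^2 * sig k x)
           \<le> 30 * (pp k)^2 * (LINT x:ico (subI I m)|lborel. ww k x)"
proof -
  define \<nu> where "\<nu> = nn k - l"
  define \<omega> :: real where "\<omega> = 2 ^ (nn k - \<nu>)"
  have I: "carries k \<nu> I" using assms(3) by (simp add: \<nu>_def)
  obtain \<sigma> where ww: "\<forall>x\<in>ico I. ww k x = wnu k \<nu> \<omega> \<sigma> I x"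
    using carries_ww_eq_wnu[OF assms(1) I] by (auto simp: \<omega>_def)
  have sub: "ico (subI I m) \<subseteq> ico I" using ico_subI_antimono[of 0 m I] by simp
  have "(LINT x:ico (subI I m)|lborel. (wtilde k x)^2 * sig k x)
      \<le> (LINT x:ico (subI I m)|lborel. majorant_sq_over_w k \<nu> \<omega> I x)"
  proof (rule set_integral_mono_nonneg)
    show "set_integrable lborel (ico (subI I m)) (majorant_sq_over_w k \<nu> \<omega> I)"
      using has_bochner_integral_majorant_sq_over_w[OF assms(1) carries_fst_le_snd[OF I]]
      unfolding set_integrable_def by (intro integrable_mult_indicator) (auto simp: ico_def intro: integrable.intros)
  qed (use wtilde_sq_sig_le[OF assms(1) I] majorant_sq_over_w_nonneg[OF assms(1)] ww sub in
       \<open>auto simp: \<omega>_def\<close>)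
  also have "\<dots> \<le> 30 * (pp k)\<^sup>2 * (LINT x:ico (subI I m)|lborel. wnu k \<nu> \<omega> \<sigma> I x)"
    by (rule set_integral_majorant_sq_over_w_le[OF assms(1) carries_fst_le_snd[OF I] _ assms(4)])
      (simp add: \<omega>_def)
  also have "\<dots> = 30 * (pp k)\<^sup>2 * (LINT x:ico (subI I m)|lborel. ww k x)"
    using ww sub by (intro arg_cong[where f = "(*) _"] set_lebesgue_integral_cong) (auto simp: ico_def)
  finally show ?thesis .
qed

end
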